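(* Let $Z$ be a continuous random variable with density $f$, CDF $F$, finite expectation, and support unbounded on the right. Suppose that for some $\alpha\in[0,1)$ and $C>0$ the generalized hazard rate satisfies $h_\alpha(z) \le C$ for all $z\in\mathbb{R}$, and that $$\mathbb{E}\big[\max_{i=1,\dots,N} Z_i\big] - \mathbb{E}[Z_1] \le Q(N)$$ for some $Q(N)>0$, where $Z_1,\dots,Z_N$ are i.i.d. copies of $Z$. Run GBPA with the stochastically smoothed potential whose perturbation is $\eta Z$ with $$\eta = \left(\frac{2CNT}{(1-\alpha)Q(N)}\right)^{1/(2-\alpha)}.$$ Then for every gain sequence $g_1,\dots,g_T\in[-1,0]^N$ the expected regret is at most $$2\left(\frac{2C}{1-\alpha}\right)^{1/(2-\alpha)} (NT)^{1/(2-\alpha)}\, Q(N)^{(1-\alpha)/(2-\alpha)}.$$ In particular, the expected regret is sublinear in $T$.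
   Context: Generalized hazard rate: for $\alpha\in[0,1)$, $h_\alpha(z) = \frac{f(z)|z|^\alpha}{(1-F(z))^{1-\alpha}}$ (for $\alpha=0$ this is the usual hazard rate). Adversarial multi-armed bandit: $N$ arms, $T$ rounds; an oblivious adversary fixes gain vectors $g_1,\dots,g_T \in [-1,0]^N$ in advance. For a random variable $W$ with a continuous distribution and finite expectation, the stochastically smoothed potential is $\tilde\Phi(G) = \mathbb{E}[\max_{i}(G_i + W_i)]$ for $G\in\mathbb{R}^N$, with $W_1,\dots,W_N$ i.i.d. copies of $W$; $\nabla_i\tilde\Phi(G) = \mathbb{P}(i = \arg\max_j (G_j+W_j))$. "Perturbation $\eta Z$" means $W=\eta Z$. GBPA$(\tilde\Phi)$: set $\hat G_0 = 0$; for $t=1,\dots,T$: $p_t = \nabla\tilde\Phi(\hat G_{t-1})$, draw $i_t \sim p_t$, observe only $g_{t,i_t}$, set $\hat g_t = \frac{g_{t,i_t}}{p_{t,i_t}} e_{i_t}$, $\hat G_t = \hat G_{t-1} + \hat g_t$. Expected regret: $\mathbb{E}\big[\max_{i}\sum_{t=1}^T (g_{t,i} - g_{t,i_t})\big]$ over the learner's randomness. *)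

theory Defs
  imports "HOL-Probability.Probability"
begin

definition pert_dist :: "(real \<Rightarrow> real) \<Rightarrow> real measure" where
  "pert_dist f = density lborel (\<lambda>z. ennreal (f z))"

text \<open>Generalized hazard rate h_alpha(z) = f(z) |z|^alpha / (1 - F(z))^(1-alpha),
  with the convention |z|^0 = 1 (also at z = 0).\<close>
definition gen_hazard :: "(real \<Rightarrow> real) \<Rightarrow> real \<Rightarrow> real \<Rightarrow> real" where
  "gen_hazard f \<alpha> z =
     f z * (if \<alpha> = 0 then 1 else \<bar>z\<bar> powr \<alpha>) / (1 - cdf (pert_dist f) z) powr (1 - \<alpha>)"

definition exp_max :: "(real \<Rightarrow> real) \<Rightarrow> nat \<Rightarrow> real" where
  "exp_max f N = (\<integral>w. Max (w ` {..<N}) \<partial>(PiM {..<N} (\<lambda>_. pert_dist f)))"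

text \<open>Gradient of the stochastically smoothed potential with perturbation eta*Z:
  probability that arm i is the argmax of G_j + eta*Z_j (ties have probability 0).\<close>
definition smooth_grad :: "(real \<Rightarrow> real) \<Rightarrow> nat \<Rightarrow> real \<Rightarrow> (nat \<Rightarrow> real) \<Rightarrow> nat \<Rightarrow> real" where
  "smooth_grad f N \<eta> G i =
     measure (PiM {..<N} (\<lambda>_. pert_dist f))
       {w \<in> space (PiM {..<N} (\<lambda>_. pert_dist f)). \<forall>j<N. j \<noteq> i \<longrightarrow> G j + \<eta> * w j < G i + \<eta> * w i}"

primrec gbpa_G :: "(real \<Rightarrow> real) \<Rightarrow> nat \<Rightarrow> real \<Rightarrow> (nat \<Rightarrow> nat \<Rightarrow> real) \<Rightarrow> (nat \<Rightarrow> nat) \<Rightarrow> nat \<Rightarrow> (nat \<Rightarrow> real)" where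
  "gbpa_G f N \<eta> g a 0 = (\<lambda>_. 0)"
| "gbpa_G f N \<eta> g a (Suc t) =
     (let G = gbpa_G f N \<eta> g a t; i = a (Suc t)
      in G(i := G i + g (Suc t) i / smooth_grad f N \<eta> G i))"

definition gbpa_path_prob :: "(real \<Rightarrow> real) \<Rightarrow> nat \<Rightarrow> real \<Rightarrow> (nat \<Rightarrow> nat \<Rightarrow> real) \<Rightarrow> nat \<Rightarrow> (nat \<Rightarrow> nat) \<Rightarrow> real" where
  "gbpa_path_prob f N \<eta> g T a = (\<Prod>t\<in>{1..T}. smooth_grad f N \<eta> (gbpa_G f N \<eta> g a (t - 1)) (a t))"

text \<open>Expected regret of GBPA over the learner's randomness (finite sum over arm sequences).\<close>
definition gbpa_regret :: "(real \<Rightarrow> real) \<Rightarrow> nat \<Rightarrow> real \<Rightarrow> (nat \<Rightarrow> nat \<Rightarrow> real) \<Rightarrow> nat \<Rightarrow> real" where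
  "gbpa_regret f N \<eta> g T =
     (\<Sum>a\<in>PiE {1..T} (\<lambda>_. {..<N}).
        gbpa_path_prob f N \<eta> g T a *
        (Max ((\<lambda>i. \<Sum>t\<in>{1..T}. g t i) ` {..<N}) - (\<Sum>t\<in>{1..T}. g t (a t))))"

definition gain_seq :: "nat \<Rightarrow> nat \<Rightarrow> (nat \<Rightarrow> nat \<Rightarrow> real) \<Rightarrow> bool" where
  "gain_seq N T g \<longleftrightarrow> (\<forall>t\<in>{1..T}. \<forall>i<N. -1 \<le> g t i \<and> g t i \<le> 0)"

definition eta_choice :: "real \<Rightarrow> real \<Rightarrow> real \<Rightarrow> nat \<Rightarrow> nat \<Rightarrow> real" where
  "eta_choice C \<alpha> Q N T = (2 * C * real N * real T / ((1 - \<alpha>) * Q)) powr (1 / (2 - \<alpha>))"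

definition regret_bound :: "real \<Rightarrow> real \<Rightarrow> real \<Rightarrow> nat \<Rightarrow> nat \<Rightarrow> real" where
  "regret_bound C \<alpha> Q N T =
     2 * (2 * C / (1 - \<alpha>)) powr (1 / (2 - \<alpha>)) * (real N * real T) powr (1 / (2 - \<alpha>))
       * Q powr ((1 - \<alpha>) / (2 - \<alpha>))"

end

theory Submission
  imports Defs
begin

text \<open>GBPA is analysed through its potential \<open>\<Phi>(G) = E max_j (G_j + \<eta> Z_j)\<close>, whose gradient
  is the sampling distribution \<open>p\<close>. The expected regret splits into \<open>E \<Phi>(Ghat_T)\<close> minus the
  collected gain, bounded round by round starting from \<open>\<Phi>(0) = \<eta> E max_j Z_j\<close>, and
  \<open>max_j G_T,j - E \<Phi>(Ghat_T) \<le> - \<eta> E Z\<close>, since \<open>\<Phi>(G) \<ge> G_j + \<eta> E Z\<close> and the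
  importance-weighted estimates \<open>Ghat\<close> never overestimate the true gains in expectation; together
  they give the overestimation penalty \<open>\<eta> Q(N)\<close>. In a round where arm \<open>i\<close> loses \<open>L\<close>, the
  potential moves by \<open>- L p_i\<close> plus at most \<open>L\<close> times the probability that \<open>i\<close> leads by at
  most \<open>L\<close>. The bounded generalised hazard rate makes \<open>F\<close> locally Hoelder of exponent
  \<open>1 - \<alpha>\<close> with constant proportional to \<open>(1 - F) powr (1 - \<alpha>)\<close>, and Jensen's inequality turns
  this into a divergence penalty of at most \<open>2 C / ((1 - \<alpha>) \<eta> powr (1 - \<alpha>))\<close> per arm and
  round. The stated \<open>\<eta>\<close> balances the two penalties, leaving a bound of order
  \<open>T powr (1 / (2 - \<alpha>))\<close>.\<close>

section \<open>Elementary real analysis\<close>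

lemma powr_add_le_add_powr:
  fixes x y b :: real
  assumes "0 \<le> x" "0 \<le> y" "0 < b" "b \<le> 1"
  shows "(x + y) powr b \<le> x powr b + y powr b"
proof (cases "x + y = 0")
  case True
  then show ?thesis using assms by simp
next
  case False
  define s where "s = x + y"
  have s: "s > 0" using False assms unfolding s_def by simp
  have x: "x / s \<le> (x / s) powr b"
    using powr_mono'[of b 1 "x/s"] assms s by (simp add: s_def)
  have "0 \<le> y / s" "y / s \<le> 1" using assms s by (auto simp: s_def)
  then have y: "y / s \<le> (y / s) powr b"
    using powr_mono'[of b 1 "y/s"] assms s by simp
  have "1 = x / s + y / s" using s by (simp add: s_def add_divide_distrib[symmetric])
  also have "\<dots> \<le> (x powr b + y powr b) / s powr b"
    using x y by (simp add: powr_divide add_divide_distrib)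
  finally show ?thesis using s by (simp add: s_def divide_simps split: if_splits)
qed

definition abs_powr_antideriv :: "real \<Rightarrow> real \<Rightarrow> real" where
  "abs_powr_antideriv b z = ((max z 0) powr b - (max (-z) 0) powr b) / b"

lemma abs_powr_antideriv_diff_le:
  fixes a c b :: real
  assumes "a \<le> c" "0 < b" "b \<le> 1"
  shows "abs_powr_antideriv b c - abs_powr_antideriv b a \<le> 2 * (c - a) powr b / b"
proof -
  consider "0 \<le> a" | "c \<le> 0" | "a < 0" "0 < c" by linarith
  then show ?thesis
  proof cases
    case 1
    have "c powr b \<le> a powr b + (c - a) powr b"
      using powr_add_le_add_powr[of a "c - a" b] assms 1 by simp
    then have "c powr b - a powr b \<le> 2 * (c - a) powr b"
      using powr_ge_zero[of "c - a" b] by linarith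
    moreover have "max c 0 = c" "max a 0 = a" "max (-c) 0 = 0" "max (-a) 0 = 0"
      using 1 assms by auto
    then have "abs_powr_antideriv b c - abs_powr_antideriv b a = (c powr b - a powr b) / b"
      by (simp add: abs_powr_antideriv_def diff_divide_distrib)
    ultimately show ?thesis using assms by (simp add: divide_right_mono)
  next
    case 2
    have "(-a) powr b \<le> (-c) powr b + (c - a) powr b"
      using powr_add_le_add_powr[of "-c" "c - a" b] assms 2 by simp
    then have "(-a) powr b - (-c) powr b \<le> 2 * (c - a) powr b"
      using powr_ge_zero[of "c - a" b] by linarith
    moreover have "max c 0 = 0" "max a 0 = 0" "max (-c) 0 = -c" "max (-a) 0 = -a"
      using 2 assms by auto
    then have "abs_powr_antideriv b c - abs_powr_antideriv b a = ((-a) powr b - (-c) powr b) / b"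
      by (simp add: abs_powr_antideriv_def diff_divide_distrib)
    ultimately show ?thesis using assms by (simp add: divide_right_mono)
  next
    case 3
    have "c powr b \<le> (c - a) powr b" "(-a) powr b \<le> (c - a) powr b"
      using 3 assms by (intro powr_mono2; simp)+
    then show ?thesis using 3 assms
      by (simp add: abs_powr_antideriv_def max_def divide_simps)
  qed
qed

lemma abs_powr_antideriv_has_real_derivative:
  fixes b z :: real
  assumes "0 < b" "z \<noteq> 0"
  shows "(abs_powr_antideriv b has_real_derivative \<bar>z\<bar> powr (b - 1)) (at z)"
proof (cases "z > 0")
  case True
  have "((\<lambda>z. z powr b / b) has_real_derivative (b * z powr (b - 1)) / b) (at z)"
    by (intro DERIV_cdivide has_real_derivative_powr True)
  then have "((\<lambda>z. z powr b / b) has_real_derivative \<bar>z\<bar> powr (b - 1)) (at z)"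
    using True assms by simp
  then show ?thesis
    by (rule has_field_derivative_transform_within_open[where S="{0<..}"])
       (use True in \<open>auto simp: abs_powr_antideriv_def\<close>)
next
  case False
  then have z: "z < 0" using assms by simp
  have "((\<lambda>z. (-z) powr b) has_real_derivative (b * (-z) powr (b - 1)) * (-1)) (at z)"
    by (rule DERIV_chain2[where g="\<lambda>z. -z", OF has_real_derivative_powr])
       (use z in \<open>auto intro!: derivative_eq_intros\<close>)
  then have "((\<lambda>z. - ((-z) powr b) / b) has_real_derivative - ((b * (-z) powr (b - 1)) * (-1)) / b) (at z)"
    by (intro DERIV_cdivide DERIV_minus)
  then have "((\<lambda>z. - ((-z) powr b) / b) has_real_derivative \<bar>z\<bar> powr (b - 1)) (at z)"
    using z assms by simp
  then show ?thesis
    by (rule has_field_derivative_transform_within_open[where S="{..<0}"])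
       (use z in \<open>auto simp: abs_powr_antideriv_def\<close>)
qed

lemma continuous_on_abs_powr_antideriv: "0 < b \<Longrightarrow> continuous_on S (abs_powr_antideriv b)"
  unfolding abs_powr_antideriv_def by (intro continuous_intros continuous_on_powr') auto

lemma has_integral_abs_powr:
  fixes a c b :: real
  assumes "a \<le> c" "0 < b"
  shows "((\<lambda>z. \<bar>z\<bar> powr (b - 1)) has_integral
           (abs_powr_antideriv b c - abs_powr_antideriv b a)) {a..c}"
  using assms abs_powr_antideriv_has_real_derivative[of b] continuous_on_abs_powr_antideriv[of b]
  by (intro fundamental_theorem_of_calculus_interior_strong[where S="{0}"])
     (auto simp: has_real_derivative_iff_has_vector_derivative[symmetric])

text \<open>Jensen's inequality for the concave map \<open>v \<mapsto> v powr b\<close>, via its tangent at the mean.\<close>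

lemma (in prob_space) integral_powr_le_powr_integral:
  fixes g :: "'a \<Rightarrow> real" and b :: real
  assumes g: "integrable M g" and gb: "integrable M (\<lambda>x. g x powr b)"
    and nonneg: "\<And>x. x \<in> space M \<Longrightarrow> 0 \<le> g x"
    and b: "0 < b" "b \<le> 1" and pos: "0 < expectation g"
  shows "expectation (\<lambda>x. g x powr b) \<le> expectation g powr b"
proof -
  define p where "p = expectation g"
  have p: "0 < p" using pos by (simp add: p_def)
  have tangent: "v powr b \<le> p powr b * (b / p) * v + p powr b * (1 - b)" if v: "0 \<le> v" for v
  proof (cases "v = 0")
    case True
    then show ?thesis using b p by simp
  next
    case False
    then have "(v / p) powr b * 1 powr (1 - b) \<le> b * (v / p) + (1 - b) * 1"
      using Youngs_inequality_0[of b "1 - b" "v / p" 1] b v p by simp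
    then have "v powr b / p powr b \<le> b * (v / p) + (1 - b)"
      using v p by (simp add: powr_divide)
    then have "v powr b \<le> p powr b * (b * (v / p) + (1 - b))"
      using p by (simp add: divide_simps mult.commute)
    then show ?thesis by (simp add: algebra_simps)
  qed
  have "expectation (\<lambda>x. g x powr b)
      \<le> expectation (\<lambda>x. p powr b * (b / p) * g x + p powr b * (1 - b))"
    using g gb nonneg tangent by (intro integral_mono) auto
  also have "\<dots> = p powr b * (b / p) * p + p powr b * (1 - b)"
    using g by (simp add: prob_space p_def)
  also have "\<dots> = p powr b" using p by (simp add: algebra_simps)
  finally show ?thesis by (simp add: p_def)
qed

section \<open>The perturbation and its product measure\<close>

locale perturbation =
  fixes f :: "real \<Rightarrow> real"
  assumes f_meas: "f \<in> borel_measurable borel"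
    and f_nonneg: "\<forall>z. 0 \<le> f z"
    and f_int: "integrable lborel f"
    and f_one: "(\<integral>z. f z \<partial>lborel) = 1"
begin

abbreviation F :: "real \<Rightarrow> real" where
  "F \<equiv> cdf (pert_dist f)"

abbreviation PZ :: "nat set \<Rightarrow> (nat \<Rightarrow> real) measure" where
  "PZ I \<equiv> PiM I (\<lambda>_. pert_dist f)"

lemma space_pert_dist [simp]: "space (pert_dist f) = UNIV"
  by (simp add: pert_dist_def)

lemma sets_pert_dist [simp, measurable_cong]: "sets (pert_dist f) = sets borel"
  by (simp add: pert_dist_def)

lemma real_distribution_pert_dist: "real_distribution (pert_dist f)"
proof -
  have "emeasure (pert_dist f) UNIV = (\<integral>\<^sup>+ x. ennreal (f x) \<partial>lborel)"
    unfolding pert_dist_def using f_meas by (simp add: emeasure_density)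
  also have "\<dots> = ennreal (\<integral>z. f z \<partial>lborel)"
    using f_int f_nonneg by (intro nn_integral_eq_integral) auto
  finally have "prob_space (pert_dist f)"
    using f_one by (intro prob_spaceI) simp
  then show ?thesis by (simp add: real_distribution_def real_distribution_axioms_def)
qed

sublocale Z: real_distribution "pert_dist f"
  by (rule real_distribution_pert_dist)

sublocale PS: product_sigma_finite "\<lambda>_::nat. pert_dist f"
  by unfold_locales

lemma borel_measurable_F [measurable]: "F \<in> borel_measurable borel"
  by (rule borel_measurable_mono) (simp add: mono_def Z.cdf_nondecreasing)

lemma prob_space_PZ: "prob_space (PZ I)"
  by (intro prob_space_PiM Z.prob_space_axioms)

lemma measure_pert_dist_singleton: "measure (pert_dist f) {c} = 0"
proof -
  have "emeasure (pert_dist f) {c} = (\<integral>\<^sup>+ x. ennreal (f x) * indicator {c} x \<partial>lborel)"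
    unfolding pert_dist_def using f_meas by (simp add: emeasure_density)
  also have "\<dots> = 0"
    by (rule nn_integral_null_set) (simp add: finite_imp_null_set_lborel)
  finally show ?thesis by (simp add: measure_def)
qed

lemma measure_pert_dist_Ioc: "a \<le> b \<Longrightarrow> measure (pert_dist f) {a<..b} = F b - F a"
  by (cases "a = b") (simp_all add: Z.cdf_diff_eq)

lemma fun_upd_in_space_PZ: "w \<in> space (PZ J) \<Longrightarrow> w(i := x) \<in> space (PZ (insert i J))"
  by (auto simp: space_PiM intro!: PiE_fun_upd)

lemma measure_PZ_insert:
  assumes i: "i \<notin> J" and J: "finite J"
    and S: "S \<in> sets (PZ (insert i J))"
    and h [measurable]: "h \<in> borel_measurable (PZ J)"
    and slice: "\<And>w. w \<in> space (PZ J) \<Longrightarrow> measure (pert_dist f) {x. w(i := x) \<in> S} = h w"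
    and h01: "\<And>w. 0 \<le> h w" "\<And>w. h w \<le> 1"
  shows "measure (PZ (insert i J)) S = (\<integral>w. h w \<partial>PZ J)"
proof -
  interpret PJ: prob_space "PZ J" by (rule prob_space_PZ)
  interpret PI: prob_space "PZ (insert i J)" by (rule prob_space_PZ)
  have "emeasure (PZ (insert i J)) S = (\<integral>\<^sup>+ w. indicator S w \<partial>PZ (insert i J))"
    using S by simp
  also have "\<dots> = (\<integral>\<^sup>+ w. (\<integral>\<^sup>+ x. indicator S (w(i := x)) \<partial>pert_dist f) \<partial>PZ J)"
    using S i J by (intro PS.product_nn_integral_insert) auto
  also have "\<dots> = (\<integral>\<^sup>+ w. ennreal (h w) \<partial>PZ J)"
  proof (rule nn_integral_cong)
    fix w assume w: "w \<in> space (PZ J)"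
    have "(\<lambda>v. w(i := v)) \<in> measurable (pert_dist f) (PZ (insert i J))"
      using measurable_component_update[OF w i] by simp
    from measurable_sets[OF this S]
    have "{x. w(i := x) \<in> S} \<in> sets (pert_dist f)"
      by (simp add: vimage_def)
    have "(\<integral>\<^sup>+ x. indicator S (w(i := x)) \<partial>pert_dist f)
        = (\<integral>\<^sup>+ x. indicator {x. w(i := x) \<in> S} x \<partial>pert_dist f)"
      by (intro nn_integral_cong) (simp add: indicator_def)
    also have "\<dots> = emeasure (pert_dist f) {x. w(i := x) \<in> S}"
      using \<open>{x. w(i := x) \<in> S} \<in> sets (pert_dist f)\<close> by simp
    also have "\<dots> = ennreal (h w)"
      using slice[OF w] Z.emeasure_eq_measure by simp
    finally show "(\<integral>\<^sup>+ x. indicator S (w(i := x)) \<partial>pert_dist f) = ennreal (h w)" .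
  qed
  also have "\<dots> = ennreal (\<integral>w. h w \<partial>PZ J)"
    using h01 by (intro nn_integral_eq_integral PJ.integrable_const_bound[where B=1]) auto
  finally show ?thesis
    using h01 by (simp add: PI.emeasure_eq_measure)
qed

end

section \<open>Leaders of the perturbed gains\<close>

definition max_others :: "nat \<Rightarrow> real \<Rightarrow> (nat \<Rightarrow> real) \<Rightarrow> nat \<Rightarrow> (nat \<Rightarrow> real) \<Rightarrow> real" where
  "max_others N \<eta> G i w = Max ((\<lambda>j. G j + \<eta> * w j) ` ({..<N} - {i}))"

definition narrow_lead :: "nat \<Rightarrow> real \<Rightarrow> (nat \<Rightarrow> real) \<Rightarrow> nat \<Rightarrow> real \<Rightarrow> (nat \<Rightarrow> real) set" where
  "narrow_lead N \<eta> G i L =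
     {w. max_others N \<eta> G i w < G i + \<eta> * w i \<and> G i + \<eta> * w i \<le> max_others N \<eta> G i w + L}"

lemma max_others_fun_upd [simp]: "max_others N \<eta> G i (w(i := x)) = max_others N \<eta> G i w"
  unfolding max_others_def by (intro arg_cong[where f=Max] image_cong) auto

lemma others_nonempty:
  assumes "2 \<le> (N::nat)"
  shows "{..<N} - {i} \<noteq> {}"
proof -
  have "(if i = 0 then 1 else 0) \<in> {..<N} - {i}" using assms by auto
  then show ?thesis by blast
qed

lemma max_others_less_iff:
  assumes "2 \<le> N"
  shows "max_others N \<eta> G i w < c \<longleftrightarrow> (\<forall>j<N. j \<noteq> i \<longrightarrow> G j + \<eta> * w j < c)"
  using others_nonempty[OF assms] by (auto simp: max_others_def)

lemma Max_perturbed_eq: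
  assumes "2 \<le> N" "i < N"
  shows "Max ((\<lambda>j. G j + \<eta> * w j) ` {..<N}) = max (G i + \<eta> * w i) (max_others N \<eta> G i w)"
proof -
  have "{..<N} = insert i ({..<N} - {i})" using assms by auto
  then show ?thesis
    using others_nonempty[OF assms(1)] unfolding max_others_def
    by (subst (1) \<open>{..<N} = _\<close>, subst image_insert, subst Max_insert) auto
qed

context perturbation
begin

lemma borel_measurable_max_others:
  "{..<N} - {i} \<subseteq> I \<Longrightarrow> max_others N \<eta> G i \<in> borel_measurable (PZ I)"
  unfolding max_others_def by (intro borel_measurable_Max) auto

lemma borel_measurable_max_others_others [measurable]:
  "max_others N \<eta> G i \<in> borel_measurable (PZ ({..<N} - {i}))"
  by (rule borel_measurable_max_others) simp

lemma borel_measurable_coordinate_affine: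
  "i \<in> I \<Longrightarrow> (\<lambda>w. a + b * w i) \<in> borel_measurable (PZ I)"
  by measurable

lemma sets_leads:
  assumes "2 \<le> N" "i < N"
  shows "{w \<in> space (PZ {..<N}). \<forall>j<N. j \<noteq> i \<longrightarrow> G j + \<eta> * w j < G i + \<eta> * w i}
           \<in> sets (PZ {..<N})"
proof -
  have "{w \<in> space (PZ {..<N}). \<forall>j<N. j \<noteq> i \<longrightarrow> G j + \<eta> * w j < G i + \<eta> * w i}
      = {w \<in> space (PZ {..<N}). max_others N \<eta> G i w < G i + \<eta> * w i}"
    using max_others_less_iff[OF assms(1)] by auto
  also have "\<dots> \<in> sets (PZ {..<N})"
    using borel_measurable_max_others[of N i "{..<N}" \<eta> G]
      borel_measurable_coordinate_affine[of i "{..<N}" "G i" \<eta>] assms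
    by (intro borel_measurable_less) auto
  finally show ?thesis .
qed

lemma sets_narrow_lead:
  assumes "i < N"
  shows "narrow_lead N \<eta> G i L \<inter> space (PZ {..<N}) \<in> sets (PZ {..<N})"
proof -
  have "narrow_lead N \<eta> G i L \<inter> space (PZ {..<N})
      = {w \<in> space (PZ {..<N}). max_others N \<eta> G i w < G i + \<eta> * w i}
        \<inter> {w \<in> space (PZ {..<N}). G i + \<eta> * w i \<le> max_others N \<eta> G i w + L}"
    by (auto simp: narrow_lead_def)
  also have "\<dots> \<in> sets (PZ {..<N})"
    using borel_measurable_max_others[of N i "{..<N}" \<eta> G]
      borel_measurable_coordinate_affine[of i "{..<N}" "G i" \<eta>] assms
    by (intro sets.Int borel_measurable_less borel_measurable_le borel_measurable_add) auto
  finally show ?thesis .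
qed

lemma smooth_grad_eq_integral:
  assumes N: "2 \<le> N" "i < N" and eta: "\<eta> > 0"
  shows "smooth_grad f N \<eta> G i
           = (\<integral>w. 1 - F ((max_others N \<eta> G i w - G i) / \<eta>) \<partial>PZ ({..<N} - {i}))"
proof -
  let ?S = "{w \<in> space (PZ {..<N}). \<forall>j<N. j \<noteq> i \<longrightarrow> G j + \<eta> * w j < G i + \<eta> * w i}"
  have ins: "insert i ({..<N} - {i}) = {..<N}" using N by auto
  have "smooth_grad f N \<eta> G i = measure (PZ (insert i ({..<N} - {i}))) ?S"
    unfolding smooth_grad_def ins ..
  also have "\<dots> = (\<integral>w. 1 - F ((max_others N \<eta> G i w - G i) / \<eta>) \<partial>PZ ({..<N} - {i}))"
  proof (rule measure_PZ_insert)
    show "?S \<in> sets (PZ (insert i ({..<N} - {i})))"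
      unfolding ins by (rule sets_leads[OF N])
    fix w assume w: "w \<in> space (PZ ({..<N} - {i}))"
    have "w(i := x) \<in> ?S \<longleftrightarrow> x \<in> UNIV - {..(max_others N \<eta> G i w - G i) / \<eta>}" for x
    proof -
      have "w(i := x) \<in> space (PZ {..<N})"
        using fun_upd_in_space_PZ[OF w] ins by metis
      then have "w(i := x) \<in> ?S \<longleftrightarrow> max_others N \<eta> G i w < G i + \<eta> * x"
        using max_others_less_iff[OF N(1), of \<eta> G i "w(i := x)" "G i + \<eta> * x"] by auto
      also have "\<dots> \<longleftrightarrow> (max_others N \<eta> G i w - G i) / \<eta> < x"
        using eta by (simp add: divide_simps algebra_simps)
      finally show ?thesis by auto
    qed
    then have "{x. w(i := x) \<in> ?S} = UNIV - {..(max_others N \<eta> G i w - G i) / \<eta>}"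
      by blast
    then show "measure (pert_dist f) {x. w(i := x) \<in> ?S} = 1 - F ((max_others N \<eta> G i w - G i) / \<eta>)"
      using Z.prob_compl[of "{..(max_others N \<eta> G i w - G i) / \<eta>}"] by (simp add: cdf_def)
  qed (auto simp: Z.cdf_nonneg Z.cdf_bounded_prob)
  finally show ?thesis .
qed

lemma measure_narrow_lead_eq_integral:
  assumes N: "2 \<le> N" "i < N" and eta: "\<eta> > 0" and L: "0 \<le> L"
  shows "measure (PZ {..<N}) (narrow_lead N \<eta> G i L \<inter> space (PZ {..<N}))
     = (\<integral>w. F ((max_others N \<eta> G i w - G i) / \<eta> + L / \<eta>) - F ((max_others N \<eta> G i w - G i) / \<eta>)
          \<partial>PZ ({..<N} - {i}))"
proof -
  let ?S = "narrow_lead N \<eta> G i L \<inter> space (PZ {..<N})"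
  have ins: "insert i ({..<N} - {i}) = {..<N}" using N by auto
  have "measure (PZ {..<N}) ?S = measure (PZ (insert i ({..<N} - {i}))) ?S"
    unfolding ins ..
  also have "\<dots> = (\<integral>w. F ((max_others N \<eta> G i w - G i) / \<eta> + L / \<eta>) - F ((max_others N \<eta> G i w - G i) / \<eta>)
                   \<partial>PZ ({..<N} - {i}))"
  proof (rule measure_PZ_insert)
    show "?S \<in> sets (PZ (insert i ({..<N} - {i})))"
      unfolding ins by (rule sets_narrow_lead[OF N(2)])
    fix w assume w: "w \<in> space (PZ ({..<N} - {i}))"
    define y where "y = (max_others N \<eta> G i w - G i) / \<eta>"
    have "w(i := x) \<in> ?S \<longleftrightarrow> x \<in> {y<..y + L / \<eta>}" for x
    proof -
      have "w(i := x) \<in> space (PZ {..<N})"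
        using fun_upd_in_space_PZ[OF w] ins by metis
      then show ?thesis
        using eta by (simp add: narrow_lead_def y_def divide_simps algebra_simps)
    qed
    then have "{x. w(i := x) \<in> ?S} = {y<..y + L / \<eta>}"
      by blast
    then show "measure (pert_dist f) {x. w(i := x) \<in> ?S} = F (y + L / \<eta>) - F y"
      using L eta by (simp add: measure_pert_dist_Ioc)
  next
    fix w
    let ?y = "(max_others N \<eta> G i w - G i) / \<eta>"
    show "0 \<le> F (?y + L / \<eta>) - F ?y"
      using Z.cdf_nondecreasing L eta by simp
    show "F (?y + L / \<eta>) - F ?y \<le> 1"
      using Z.cdf_nonneg[of ?y] Z.cdf_bounded_prob[of "?y + L / \<eta>"] by linarith
  qed auto
  finally show ?thesis .
qed

lemma measure_tie_eq_0:
  assumes "j < N" "k < N" "j \<noteq> k" and eta: "\<eta> > 0"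
  shows "measure (PZ {..<N}) {w \<in> space (PZ {..<N}). G j + \<eta> * w j = G k + \<eta> * w k} = 0"
proof -
  let ?S = "{w \<in> space (PZ {..<N}). G j + \<eta> * w j = G k + \<eta> * w k}"
  have ins: "insert j ({..<N} - {j}) = {..<N}" using assms by auto
  have "measure (PZ {..<N}) ?S = measure (PZ (insert j ({..<N} - {j}))) ?S"
    unfolding ins ..
  also have "\<dots> = (\<integral>w. 0 \<partial>PZ ({..<N} - {j}))"
  proof (rule measure_PZ_insert)
    show "?S \<in> sets (PZ (insert j ({..<N} - {j})))"
      unfolding ins using assms
      by (intro borel_measurable_eq borel_measurable_coordinate_affine) auto
    fix w
    have "{x. w(j := x) \<in> ?S} \<subseteq> {(G k + \<eta> * w k - G j) / \<eta>}"
      using eta assms by (auto simp: field_simps)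
    then have "measure (pert_dist f) {x. w(j := x) \<in> ?S} \<le> measure (pert_dist f) {(G k + \<eta> * w k - G j) / \<eta>}"
      by (intro Z.finite_measure_mono) auto
    then show "measure (pert_dist f) {x. w(j := x) \<in> ?S} = 0"
      using measure_pert_dist_singleton by (simp add: measure_le_0_iff)
  qed auto
  finally show ?thesis by simp
qed

end

lemma strict_leader_exists:
  fixes v :: "nat \<Rightarrow> real"
  assumes "0 < N" and distinct: "\<forall>j\<in>{..<N}. \<forall>k\<in>{..<N} - {j}. v j \<noteq> v k"
  shows "\<exists>i<N. \<forall>j<N. j \<noteq> i \<longrightarrow> v j < v i"
proof -
  have "0 \<in> {..<N}" using assms by simp
  then have "Max (v ` {..<N}) \<in> v ` {..<N}" by (intro Max_in) auto
  then obtain i where i: "i < N" "Max (v ` {..<N}) = v i" by auto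
  have "v j < v i" if "j < N" "j \<noteq> i" for j
  proof -
    have "v j \<le> Max (v ` {..<N})" using that by (intro Max_ge) auto
    moreover have "v j \<noteq> v i" using distinct that i by auto
    ultimately show ?thesis using i by simp
  qed
  then show ?thesis using i by blast
qed

context perturbation
begin

lemma AE_no_ties:
  assumes eta: "\<eta> > 0"
  shows "AE w in PZ {..<N}. \<forall>j\<in>{..<N}. \<forall>k\<in>{..<N} - {j}. G j + \<eta> * w j \<noteq> G k + \<eta> * w k"
proof (intro AE_finite_allI finite_Diff finite_lessThan)
  fix j k assume jk: "j \<in> {..<N}" "k \<in> {..<N} - {j}"
  interpret P: prob_space "PZ {..<N}" by (rule prob_space_PZ)
  let ?T = "{w \<in> space (PZ {..<N}). G j + \<eta> * w j = G k + \<eta> * w k}"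
  have "?T \<in> sets (PZ {..<N})"
    using jk by (intro borel_measurable_eq borel_measurable_coordinate_affine) auto
  with measure_tie_eq_0[of j N k \<eta> G] jk eta
  have "?T \<in> null_sets (PZ {..<N})"
    by (simp add: null_sets_def P.emeasure_eq_measure)
  from AE_not_in[OF this] AE_space
  show "AE w in PZ {..<N}. G j + \<eta> * w j \<noteq> G k + \<eta> * w k"
    by eventually_elim auto
qed

lemma sum_smooth_grad:
  assumes N: "2 \<le> N" and eta: "\<eta> > 0"
  shows "(\<Sum>i<N. smooth_grad f N \<eta> G i) = 1"
proof -
  interpret P: prob_space "PZ {..<N}" by (rule prob_space_PZ)
  define E where
    "E i = {w \<in> space (PZ {..<N}). \<forall>j<N. j \<noteq> i \<longrightarrow> G j + \<eta> * w j < G i + \<eta> * w i}" for i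
  have E_sets: "E i \<in> sets (PZ {..<N})" if "i < N" for i
    unfolding E_def using sets_leads[OF N that] .
  have disjoint: "disjoint_family_on E {..<N}"
    unfolding disjoint_family_on_def
  proof (intro ballI impI)
    fix i k assume ik: "i \<in> {..<N}" "k \<in> {..<N}" "i \<noteq> k"
    have False if "w \<in> E i" "w \<in> E k" for w
    proof -
      have "G k + \<eta> * w k < G i + \<eta> * w i" "G i + \<eta> * w i < G k + \<eta> * w k"
        using that ik unfolding E_def by auto
      then show False by simp
    qed
    then show "E i \<inter> E k = {}" by blast
  qed
  have covered: "AE w in PZ {..<N}. w \<in> space (PZ {..<N}) \<longleftrightarrow> w \<in> (\<Union>i<N. E i)"
    using AE_no_ties[OF eta, of N G]
  proof eventually_elim
    case (elim w)
    then show ?case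
      using strict_leader_exists[of N "\<lambda>j. G j + \<eta> * w j"] N by (auto simp: E_def)
  qed
  have "(\<Sum>i<N. smooth_grad f N \<eta> G i) = (\<Sum>i<N. measure (PZ {..<N}) (E i))"
    unfolding smooth_grad_def E_def ..
  also have "\<dots> = measure (PZ {..<N}) (\<Union>i<N. E i)"
    using E_sets disjoint by (intro measure_finite_Union[symmetric]) (auto simp: P.emeasure_eq_measure)
  also have "\<dots> = measure (PZ {..<N}) (space (PZ {..<N}))"
    using covered E_sets by (intro measure_eq_AE[symmetric]) auto
  finally show ?thesis by (simp add: P.prob_space)
qed

end

section \<open>The stochastically smoothed potential\<close>

definition smooth_potential :: "(real \<Rightarrow> real) \<Rightarrow> nat \<Rightarrow> real \<Rightarrow> (nat \<Rightarrow> real) \<Rightarrow> real" where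
  "smooth_potential f N \<eta> G =
     (\<integral>w. Max ((\<lambda>j. G j + \<eta> * w j) ` {..<N}) \<partial>PiM {..<N} (\<lambda>_. pert_dist f))"

locale perturbation_with_mean = perturbation +
  assumes finite_mean: "integrable lborel (\<lambda>z. z * f z)"
begin

lemma integrable_pert_dist_id: "integrable (pert_dist f) (\<lambda>z. z)"
  unfolding pert_dist_def using f_meas f_nonneg finite_mean
  by (subst integrable_density) (auto simp: measurable_lborel1 mult.commute)

lemma integrable_PZ_component:
  assumes "j \<in> I"
  shows "integrable (PZ I) (\<lambda>w. w j)"
proof -
  have "integrable (distr (PZ I) (pert_dist f) (\<lambda>w. w j)) (\<lambda>z. z)"
    using distr_PiM_component[OF Z.prob_space_axioms assms] integrable_pert_dist_id by simp
  then show ?thesis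
    using integrable_distr_eq[OF measurable_component_singleton[OF assms, of "\<lambda>_. pert_dist f"], of "\<lambda>z. z"] by simp
qed

lemma integral_PZ_component:
  assumes "j \<in> I"
  shows "(\<integral>w. w j \<partial>PZ I) = (\<integral>z. z \<partial>pert_dist f)"
proof -
  have "(\<integral>z. z \<partial>distr (PZ I) (pert_dist f) (\<lambda>w. w j)) = (\<integral>w. w j \<partial>PZ I)"
    using integral_distr[OF measurable_component_singleton[OF assms, of "\<lambda>_. pert_dist f"], of "\<lambda>z. z"] by simp
  then show ?thesis
    unfolding distr_PiM_component[OF Z.prob_space_axioms assms] by simp
qed

lemma integrable_PZ_affine: "j \<in> I \<Longrightarrow> integrable (PZ I) (\<lambda>w. a + b * w j)"
proof -
  interpret P: prob_space "PZ I" by (rule prob_space_PZ)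
  show "j \<in> I \<Longrightarrow> ?thesis"
    using integrable_PZ_component by (intro Bochner_Integration.integrable_add integrable_mult_right) auto
qed

lemma integral_PZ_affine:
  assumes "j \<in> I"
  shows "(\<integral>w. a + b * w j \<partial>PZ I) = a + b * (\<integral>z. z \<partial>pert_dist f)"
proof -
  interpret P: prob_space "PZ I" by (rule prob_space_PZ)
  show ?thesis
    using integrable_PZ_component[OF assms] integral_PZ_component[OF assms] P.prob_space by simp
qed

lemma integrable_Max_perturbed:
  assumes N: "1 \<le> N"
  shows "integrable (PZ {..<N}) (\<lambda>w. Max ((\<lambda>j. G j + \<eta> * w j) ` {..<N}))"
proof (rule Bochner_Integration.integrable_bound)
  show "integrable (PZ {..<N}) (\<lambda>w. \<Sum>j<N. \<bar>G j + \<eta> * w j\<bar>)"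
    by (intro Bochner_Integration.integrable_sum Bochner_Integration.integrable_abs integrable_PZ_affine) auto
  show "(\<lambda>w. Max ((\<lambda>j. G j + \<eta> * w j) ` {..<N})) \<in> borel_measurable (PZ {..<N})"
    using borel_measurable_coordinate_affine by (intro borel_measurable_Max) auto
  show "AE w in PZ {..<N}. norm (Max ((\<lambda>j. G j + \<eta> * w j) ` {..<N})) \<le> norm (\<Sum>j<N. \<bar>G j + \<eta> * w j\<bar>)"
  proof (intro AE_I2)
    fix w
    let ?V = "(\<lambda>j. G j + \<eta> * w j) ` {..<N}"
    have "0 \<in> {..<N}" using N by simp
    then have "Max ?V \<in> ?V" by (intro Max_in) auto
    then obtain i where i: "i < N" "Max ?V = G i + \<eta> * w i" by auto
    have "\<bar>G i + \<eta> * w i\<bar> \<le> (\<Sum>j<N. \<bar>G j + \<eta> * w j\<bar>)"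
      using i by (intro member_le_sum) auto
    then show "norm (Max ?V) \<le> norm (\<Sum>j<N. \<bar>G j + \<eta> * w j\<bar>)"
      using i by simp
  qed
qed

lemma smooth_potential_ge:
  assumes "i < N"
  shows "G i + \<eta> * (\<integral>z. z \<partial>pert_dist f) \<le> smooth_potential f N \<eta> G"
proof -
  have "G i + \<eta> * (\<integral>z. z \<partial>pert_dist f) = (\<integral>w. G i + \<eta> * w i \<partial>PZ {..<N})"
    using assms by (simp add: integral_PZ_affine)
  also have "\<dots> \<le> smooth_potential f N \<eta> G"
    unfolding smooth_potential_def using assms
    by (intro integral_mono integrable_PZ_affine integrable_Max_perturbed Max_ge) auto
  finally show ?thesis .
qed

lemma smooth_potential_zero:
  assumes "0 \<le> \<eta>" "1 \<le> N"
  shows "smooth_potential f N \<eta> (\<lambda>_. 0) = \<eta> * exp_max f N"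
proof -
  have "Max ((\<lambda>j. 0 + \<eta> * w j) ` {..<N}) = \<eta> * Max (w ` {..<N})" for w :: "nat \<Rightarrow> real"
  proof -
    have "mono ((*) \<eta>)" using assms by (auto simp: mono_def mult_left_mono)
    moreover have "0 \<in> {..<N}" using assms by simp
    then have "w ` {..<N} \<noteq> {}" by blast
    ultimately have "\<eta> * Max (w ` {..<N}) = Max ((*) \<eta> ` (w ` {..<N}))"
      by (intro mono_Max_commute) auto
    then show ?thesis by (simp add: image_image)
  qed
  then show ?thesis unfolding smooth_potential_def exp_max_def by simp
qed

end

section \<open>Divergence penalty of one round\<close>

lemma Max_perturbed_decrease_le:
  assumes N: "2 \<le> N" "i < N" and L: "0 \<le> L"
  shows "Max ((\<lambda>j. (G(i := G i - L)) j + \<eta> * w j) ` {..<N}) - Max ((\<lambda>j. G j + \<eta> * w j) ` {..<N})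
           + L * indicator {w. \<forall>j<N. j \<noteq> i \<longrightarrow> G j + \<eta> * w j < G i + \<eta> * w i} w
         \<le> L * indicator (narrow_lead N \<eta> G i L) w"
proof -
  define m where "m = max_others N \<eta> G i w"
  define u where "u = G i + \<eta> * w i"
  have "max_others N \<eta> (G(i := G i - L)) i w = m"
    unfolding m_def max_others_def by (intro arg_cong[where f=Max] image_cong) auto
  then have A: "Max ((\<lambda>j. (G(i := G i - L)) j + \<eta> * w j) ` {..<N}) = max (u - L) m"
    using Max_perturbed_eq[OF N, of "G(i := G i - L)" \<eta> w] by (simp add: u_def)
  have B: "Max ((\<lambda>j. G j + \<eta> * w j) ` {..<N}) = max u m"
    using Max_perturbed_eq[OF N] by (simp add: u_def m_def)
  have E: "w \<in> {w. \<forall>j<N. j \<noteq> i \<longrightarrow> G j + \<eta> * w j < G i + \<eta> * w i} \<longleftrightarrow> m < u"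
    using max_others_less_iff[OF N(1)] by (simp add: m_def u_def)
  have S: "w \<in> narrow_lead N \<eta> G i L \<longleftrightarrow> m < u \<and> u \<le> m + L"
    by (simp add: narrow_lead_def m_def u_def)
  show ?thesis
    unfolding A B indicator_def using E S L by (auto simp: max_def)
qed

context perturbation_with_mean
begin

lemma smooth_potential_divergence_le:
  assumes N: "2 \<le> N" "i < N" and L: "0 \<le> L"
  shows "smooth_potential f N \<eta> (G(i := G i - L)) - smooth_potential f N \<eta> G + L * smooth_grad f N \<eta> G i
     \<le> L * measure (PZ {..<N}) (narrow_lead N \<eta> G i L \<inter> space (PZ {..<N}))"
proof -
  interpret P: prob_space "PZ {..<N}" by (rule prob_space_PZ)
  let ?M' = "\<lambda>w. Max ((\<lambda>j. (G(i := G i - L)) j + \<eta> * w j) ` {..<N})"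
  let ?M = "\<lambda>w. Max ((\<lambda>j. G j + \<eta> * w j) ` {..<N})"
  define E where "E = {w \<in> space (PZ {..<N}). \<forall>j<N. j \<noteq> i \<longrightarrow> G j + \<eta> * w j < G i + \<eta> * w i}"
  define S where "S = narrow_lead N \<eta> G i L \<inter> space (PZ {..<N})"
  have E: "E \<in> sets (PZ {..<N})" unfolding E_def by (rule sets_leads[OF N])
  have S: "S \<in> sets (PZ {..<N})" unfolding S_def by (rule sets_narrow_lead[OF N(2)])
  have int: "integrable (PZ {..<N}) ?M'" "integrable (PZ {..<N}) ?M"
    "integrable (PZ {..<N}) (\<lambda>w. L * indicator E w)" "integrable (PZ {..<N}) (\<lambda>w. L * indicator S w)"
    using N E S by (auto intro!: integrable_Max_perturbed integrable_mult_right integrable_real_indicator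
        simp: P.emeasure_eq_measure)
  have "smooth_grad f N \<eta> G i = measure (PZ {..<N}) E"
    unfolding smooth_grad_def E_def ..
  also have "\<dots> = (\<integral>w. indicator E w \<partial>PZ {..<N})"
    using E sets.sets_into_space[OF E] by (simp add: Int_absorb2)
  finally have "smooth_potential f N \<eta> (G(i := G i - L)) - smooth_potential f N \<eta> G + L * smooth_grad f N \<eta> G i
      = (\<integral>w. ?M' w \<partial>PZ {..<N}) - (\<integral>w. ?M w \<partial>PZ {..<N}) + (\<integral>w. L * indicator E w \<partial>PZ {..<N})"
    unfolding smooth_potential_def by simp
  also have "\<dots> = (\<integral>w. ?M' w - ?M w + L * indicator E w \<partial>PZ {..<N})"
    using int by simp
  also have "\<dots> \<le> (\<integral>w. L * indicator S w \<partial>PZ {..<N})"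
  proof (rule integral_mono)
    fix w assume "w \<in> space (PZ {..<N})"
    then show "?M' w - ?M w + L * indicator E w \<le> L * indicator S w"
      using Max_perturbed_decrease_le[OF N L, of G \<eta> w]
      by (simp add: E_def S_def indicator_def)
  qed (use int in auto)
  also have "\<dots> = L * measure (PZ {..<N}) S"
    using S sets.sets_into_space[OF S] by (simp add: Int_absorb2)
  finally show ?thesis unfolding S_def .
qed

end

locale bounded_hazard = perturbation +
  fixes \<alpha> C :: real
  assumes unbounded_right: "\<forall>x. cdf (pert_dist f) x < 1"
    and alpha_nonneg: "0 \<le> \<alpha>" and alpha_less_1: "\<alpha> < 1"
    and C_pos: "C > 0"
    and hazard: "\<forall>z. gen_hazard f \<alpha> z \<le> C"
begin

lemma density_le_hazard_bound:
  assumes "z \<noteq> 0"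
  shows "f z \<le> C * (1 - F z) powr (1 - \<alpha>) * \<bar>z\<bar> powr (- \<alpha>)"
proof -
  have "F z < 1" using unbounded_right by simp
  then have Fz: "0 < (1 - F z) powr (1 - \<alpha>)" by simp
  have h: "f z * (if \<alpha> = 0 then 1 else \<bar>z\<bar> powr \<alpha>) / (1 - F z) powr (1 - \<alpha>) \<le> C"
    using hazard unfolding gen_hazard_def by simp
  show ?thesis
  proof (cases "\<alpha> = 0")
    case True
    then show ?thesis using h Fz assms by (simp add: divide_simps)
  next
    case False
    then have "f z * \<bar>z\<bar> powr \<alpha> \<le> C * (1 - F z) powr (1 - \<alpha>)"
      using h Fz by (simp add: divide_simps)
    then show ?thesis using assms by (simp add: powr_minus_divide divide_simps)
  qed
qed

text \<open>Integrate \<open>f x \<le> C (1 - F y) powr (1 - \<alpha>) \<bar>x\<bar> powr (- \<alpha>)\<close>, valid on \<open>{y<..y + l}\<close>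
  because \<open>F\<close> is monotone.\<close>

lemma cdf_increment_le:
  assumes "0 \<le> l"
  shows "F (y + l) - F y \<le> 2 * C / (1 - \<alpha>) * (1 - F y) powr (1 - \<alpha>) * l powr (1 - \<alpha>)"
proof (cases "l = 0")
  case True
  then show ?thesis by simp
next
  case False
  then have l: "0 < l" using assms by simp
  define c where "c = C * (1 - F y) powr (1 - \<alpha>)"
  define b where "b = 1 - \<alpha>"
  have c: "0 \<le> c" unfolding c_def using C_pos by simp
  have b: "0 < b" "b \<le> 1" unfolding b_def using alpha_nonneg alpha_less_1 by auto
  let ?I = "c * (abs_powr_antideriv b (y + l) - abs_powr_antideriv b y)"
  have hi: "((\<lambda>x. c * \<bar>x\<bar> powr (b - 1)) has_integral ?I) {y..y+l}"
    using has_integral_abs_powr[of y "y + l" b] b l by (intro has_integral_mult_right) auto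
  have f_le: "f x \<le> c * \<bar>x\<bar> powr (b - 1)" if x: "x \<in> {y<..y+l}" "x \<noteq> 0" for x
  proof -
    have "F y \<le> F x" using x Z.cdf_nondecreasing[of y x] by simp
    then have "(1 - F x) powr (1 - \<alpha>) \<le> (1 - F y) powr (1 - \<alpha>)"
      using alpha_less_1 Z.cdf_bounded_prob[of x] by (intro powr_mono2) auto
    then have "C * (1 - F x) powr (1 - \<alpha>) \<le> c"
      using C_pos by (simp add: c_def)
    then have "C * (1 - F x) powr (1 - \<alpha>) * \<bar>x\<bar> powr (- \<alpha>) \<le> c * \<bar>x\<bar> powr (b - 1)"
      by (simp add: b_def mult_right_mono)
    then show ?thesis
      using density_le_hazard_bound[OF x(2)] by linarith
  qed
  have "emeasure (pert_dist f) {y<..y+l} = (\<integral>\<^sup>+ x. ennreal (f x) * indicator {y<..y+l} x \<partial>lborel)"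
    unfolding pert_dist_def using f_meas by (simp add: emeasure_density)
  also have "\<dots> \<le> (\<integral>\<^sup>+ x. ennreal (indicator {y..y+l} x * (c * \<bar>x\<bar> powr (b - 1))) \<partial>lborel)"
  proof (rule nn_integral_mono_AE)
    show "AE x in lborel. ennreal (f x) * indicator {y<..y + l} x
           \<le> ennreal (indicator {y..y + l} x * (c * \<bar>x\<bar> powr (b - 1)))"
      using AE_lborel_singleton[of 0]
    proof eventually_elim
      case (elim x)
      then show ?case
        by (cases "x \<in> {y<..y+l}") (simp_all add: f_le ennreal_leI)
    qed
  qed
  also have "\<dots> = ennreal ?I"
    using nn_integral_has_integral_lebesgue[OF _ hi] c by simp
  finally have "measure (pert_dist f) {y<..y+l} \<le> ?I"
    using has_integral_nonneg[OF hi] c by (simp add: Z.emeasure_eq_measure)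
  then have "F (y + l) - F y \<le> ?I"
    using l by (simp add: measure_pert_dist_Ioc)
  also have "\<dots> \<le> c * (2 * l powr b / b)"
    using abs_powr_antideriv_diff_le[of y "y + l" b] b l c by (intro mult_left_mono) auto
  finally show ?thesis
    by (simp add: c_def b_def ac_simps)
qed

end

context bounded_hazard
begin

lemma measure_narrow_lead_le:
  assumes N: "2 \<le> N" "i < N" and eta: "\<eta> > 0" and L: "0 \<le> L"
    and p: "0 < smooth_grad f N \<eta> G i"
  shows "measure (PZ {..<N}) (narrow_lead N \<eta> G i L \<inter> space (PZ {..<N}))
     \<le> 2 * C / (1 - \<alpha>) * (L / \<eta>) powr (1 - \<alpha>) * smooth_grad f N \<eta> G i powr (1 - \<alpha>)"
proof -
  interpret PJ: prob_space "PZ ({..<N} - {i})" by (rule prob_space_PZ)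
  define y where "y w = (max_others N \<eta> G i w - G i) / \<eta>" for w
  define K where "K = 2 * C / (1 - \<alpha>) * (L / \<eta>) powr (1 - \<alpha>)"
  have y [measurable]: "y \<in> borel_measurable (PZ ({..<N} - {i}))"
    unfolding y_def by measurable
  have F01: "0 \<le> F x" "F x < 1" for x
    using Z.cdf_nonneg unbounded_right by auto
  have F_diff: "\<bar>F a - F c\<bar> \<le> 1" for a c
    using F01[of a] F01[of c] by linarith
  have int_incr: "integrable (PZ ({..<N} - {i})) (\<lambda>w. F (y w + L / \<eta>) - F (y w))"
    using F_diff by (intro PJ.integrable_const_bound[where B=1] AE_I2) auto
  have tail: "0 < 1 - F a" "1 - F a \<le> 1" for a
    using F01[of a] by auto
  have int_tail: "integrable (PZ ({..<N} - {i})) (\<lambda>w. 1 - F (y w))"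
    using tail by (intro PJ.integrable_const_bound[where B=1] AE_I2) (simp_all add: abs_of_pos)
  have int_tail_powr: "integrable (PZ ({..<N} - {i})) (\<lambda>w. (1 - F (y w)) powr (1 - \<alpha>))"
  proof (intro PJ.integrable_const_bound[where B=1] AE_I2)
    fix w
    show "norm ((1 - F (y w)) powr (1 - \<alpha>)) \<le> 1"
      using tail[of "y w"] alpha_less_1 by (simp add: powr_le1)
  qed simp
  have "measure (PZ {..<N}) (narrow_lead N \<eta> G i L \<inter> space (PZ {..<N}))
      = (\<integral>w. F (y w + L / \<eta>) - F (y w) \<partial>PZ ({..<N} - {i}))"
    unfolding y_def by (rule measure_narrow_lead_eq_integral[OF N eta L])
  also have "\<dots> \<le> (\<integral>w. K * (1 - F (y w)) powr (1 - \<alpha>) \<partial>PZ ({..<N} - {i}))"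
    using int_incr int_tail_powr cdf_increment_le[of "L / \<eta>"] L eta
    by (intro integral_mono) (auto simp: K_def mult_ac)
  also have "\<dots> = K * (\<integral>w. (1 - F (y w)) powr (1 - \<alpha>) \<partial>PZ ({..<N} - {i}))"
    by simp
  also have "\<dots> \<le> K * smooth_grad f N \<eta> G i powr (1 - \<alpha>)"
  proof (rule mult_left_mono)
    have "smooth_grad f N \<eta> G i = (\<integral>w. 1 - F (y w) \<partial>PZ ({..<N} - {i}))"
      unfolding y_def by (rule smooth_grad_eq_integral[OF N eta])
    moreover have "(\<integral>w. (1 - F (y w)) powr (1 - \<alpha>) \<partial>PZ ({..<N} - {i}))
        \<le> (\<integral>w. 1 - F (y w) \<partial>PZ ({..<N} - {i})) powr (1 - \<alpha>)"
      using tail alpha_nonneg alpha_less_1 p calculation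
      by (intro PJ.integral_powr_le_powr_integral[OF int_tail int_tail_powr]) (auto simp: less_imp_le)
    ultimately show "(\<integral>w. (1 - F (y w)) powr (1 - \<alpha>) \<partial>PZ ({..<N} - {i}))
        \<le> smooth_grad f N \<eta> G i powr (1 - \<alpha>)"
      by simp
    show "0 \<le> K" using C_pos alpha_less_1 by (simp add: K_def)
  qed
  finally show ?thesis by (simp add: K_def)
qed

end

locale gbpa_perturbation = bounded_hazard + perturbation_with_mean
begin

text \<open>With \<open>K = 2 C / (1 - \<alpha>)\<close> and \<open>p\<close> the probability of arm \<open>i\<close>, the divergence is at most
  \<open>L K (L / \<eta>) powr (1 - \<alpha>) p powr (1 - \<alpha>)\<close>; weighted by \<open>p\<close> this is
  \<open>K (p L) powr (2 - \<alpha>) / \<eta> powr (1 - \<alpha>) \<le> K / \<eta> powr (1 - \<alpha>)\<close>.\<close>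

lemma smooth_grad_mul_divergence_le:
  assumes N: "2 \<le> N" "i < N" and eta: "\<eta> > 0" and L: "0 \<le> L"
    and Lp: "L * smooth_grad f N \<eta> G i \<le> 1"
  shows "smooth_grad f N \<eta> G i *
           (smooth_potential f N \<eta> (G(i := G i - L)) - smooth_potential f N \<eta> G + L * smooth_grad f N \<eta> G i)
         \<le> 2 * C / ((1 - \<alpha>) * \<eta> powr (1 - \<alpha>))"
proof -
  define p where "p = smooth_grad f N \<eta> G i"
  define b where "b = 1 - \<alpha>"
  define K where "K = 2 * C / (1 - \<alpha>)"
  have b: "0 < b" unfolding b_def using alpha_less_1 by simp
  have K: "0 \<le> K" unfolding K_def using C_pos alpha_less_1 by simp
  have p0: "0 \<le> p" unfolding p_def smooth_grad_def by simp
  have pL: "0 \<le> p * L" "p * L \<le> 1" using p0 L Lp by (auto simp: p_def mult.commute)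
  show ?thesis
  proof (cases "p = 0")
    case True
    have "0 \<le> 2 * C / ((1 - \<alpha>) * \<eta> powr (1 - \<alpha>))"
      using C_pos alpha_less_1 eta by (intro divide_nonneg_pos mult_pos_pos) auto
    then show ?thesis using True by (simp add: p_def[symmetric])
  next
    case False
    then have p: "0 < p" using p0 by simp
    have "p * (smooth_potential f N \<eta> (G(i := G i - L)) - smooth_potential f N \<eta> G + L * p)
        \<le> p * (L * measure (PZ {..<N}) (narrow_lead N \<eta> G i L \<inter> space (PZ {..<N})))"
      using smooth_potential_divergence_le[OF N L, of \<eta> G] p0 by (intro mult_left_mono) (auto simp: p_def)
    also have "\<dots> \<le> p * (L * (K * (L / \<eta>) powr b * p powr b))"
      using measure_narrow_lead_le[OF N eta L, of G] p p0 L
      by (intro mult_left_mono) (auto simp: p_def K_def b_def)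
    also have "\<dots> = K * ((p * L) * (p * L) powr b) / \<eta> powr b"
      using L p eta by (simp add: powr_divide powr_mult field_simps)
    also have "\<dots> \<le> K / \<eta> powr b"
    proof -
      have "(p * L) powr b \<le> 1" using pL b by (intro powr_le1) auto
      then have "(p * L) * (p * L) powr b \<le> 1" using pL by (simp add: mult_le_one)
      then show ?thesis using K eta by (intro divide_right_mono) (auto simp: mult_left_le)
    qed
    finally show ?thesis by (simp add: p_def K_def b_def)
  qed
qed

lemma smooth_potential_step_le:
  assumes N: "2 \<le> N" "i < N" and eta: "\<eta> > 0" and gi: "-1 \<le> gi" "gi \<le> 0"
  shows "smooth_grad f N \<eta> G i *
           (smooth_potential f N \<eta> (G(i := G i + gi / smooth_grad f N \<eta> G i)) - S - gi)
         \<le> smooth_grad f N \<eta> G i * (smooth_potential f N \<eta> G - S) + 2 * C / ((1 - \<alpha>) * \<eta> powr (1 - \<alpha>))"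
proof -
  define p where "p = smooth_grad f N \<eta> G i"
  have p0: "0 \<le> p" unfolding p_def smooth_grad_def by simp
  show ?thesis
  proof (cases "p = 0")
    case True
    then show ?thesis using C_pos alpha_less_1 eta by (simp add: p_def[symmetric])
  next
    case False
    then have p: "0 < p" using p0 by simp
    define L where "L = - gi / p"
    have L: "0 \<le> L" "L * p = - gi" "G(i := G i - L) = G(i := G i + gi / p)"
      unfolding L_def using gi p by (auto simp: divide_nonpos_pos)
    have "L * smooth_grad f N \<eta> G i \<le> 1" using L(2) gi by (simp add: p_def)
    from smooth_grad_mul_divergence_le[OF N eta L(1) this]
    have "p * (smooth_potential f N \<eta> (G(i := G i - L)) - smooth_potential f N \<eta> G + L * p)
        \<le> 2 * C / ((1 - \<alpha>) * \<eta> powr (1 - \<alpha>))"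
      by (simp only: p_def)
    then show ?thesis
      unfolding L(2,3) by (simp add: p_def[symmetric] algebra_simps)
  qed
qed

end

section \<open>Unrolling GBPA one round at a time\<close>

lemma gbpa_G_cong:
  "(\<forall>s\<in>{1..t}. a s = b s) \<Longrightarrow> gbpa_G f N \<eta> g a t = gbpa_G f N \<eta> g b t"
proof (induction t)
  case 0
  then show ?case by simp
next
  case (Suc t)
  then have "gbpa_G f N \<eta> g a t = gbpa_G f N \<eta> g b t" "a (Suc t) = b (Suc t)" by auto
  then show ?case by (simp add: Let_def)
qed

lemma gbpa_G_fun_upd: "t \<le> T \<Longrightarrow> gbpa_G f N \<eta> g (a(Suc T := i)) t = gbpa_G f N \<eta> g a t"
  by (rule gbpa_G_cong) auto

lemma gbpa_G_Suc_fun_upd: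
  "gbpa_G f N \<eta> g (a(Suc T := i)) (Suc T) =
     (gbpa_G f N \<eta> g a T)(i := gbpa_G f N \<eta> g a T i
                                  + g (Suc T) i / smooth_grad f N \<eta> (gbpa_G f N \<eta> g a T) i)"
  by (simp add: Let_def gbpa_G_fun_upd)

lemma gbpa_path_prob_Suc_fun_upd:
  "gbpa_path_prob f N \<eta> g (Suc T) (a(Suc T := i)) =
     gbpa_path_prob f N \<eta> g T a * smooth_grad f N \<eta> (gbpa_G f N \<eta> g a T) i"
proof -
  have "(\<Prod>t\<in>{1..T}. smooth_grad f N \<eta> (gbpa_G f N \<eta> g (a(Suc T := i)) (t - 1)) ((a(Suc T := i)) t))
      = gbpa_path_prob f N \<eta> g T a"
    unfolding gbpa_path_prob_def
  proof (intro prod.cong refl)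
    fix t assume t: "t \<in> {1..T}"
    then have "t \<le> T" by simp
    then have "t - 1 \<le> T" by arith
    then show "smooth_grad f N \<eta> (gbpa_G f N \<eta> g (a(Suc T := i)) (t - 1)) ((a(Suc T := i)) t)
      = smooth_grad f N \<eta> (gbpa_G f N \<eta> g a (t - 1)) (a t)"
      using t by (simp add: gbpa_G_fun_upd)
  qed
  then show ?thesis
    unfolding gbpa_path_prob_def by (simp add: prod.cl_ivl_Suc gbpa_G_fun_upd)
qed

lemma gbpa_path_prob_nonneg: "0 \<le> gbpa_path_prob f N \<eta> g T a"
  unfolding gbpa_path_prob_def smooth_grad_def by (intro prod_nonneg) auto

lemma sum_PiE_Suc:
  "(\<Sum>b\<in>PiE {1..Suc T} (\<lambda>_. A). h b) = (\<Sum>a\<in>PiE {1..T} (\<lambda>_. A). \<Sum>i\<in>A. h (a(Suc T := i)))"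
proof -
  have ins: "{1..Suc T} = insert (Suc T) {1..T}" by auto
  have nin: "Suc T \<notin> {1..T}" by simp
  have "(\<Sum>b\<in>PiE {1..Suc T} (\<lambda>_. A). h b)
      = (\<Sum>b\<in>(\<lambda>(y, g). g(Suc T := y)) ` (A \<times> PiE {1..T} (\<lambda>_. A)). h b)"
    unfolding ins PiE_insert_eq by simp
  also have "\<dots> = (\<Sum>(y, a)\<in>A \<times> PiE {1..T} (\<lambda>_. A). h (a(Suc T := y)))"
    by (subst sum.reindex[OF inj_combinator[OF nin]]) (simp add: case_prod_unfold)
  also have "\<dots> = (\<Sum>y\<in>A. \<Sum>a\<in>PiE {1..T} (\<lambda>_. A). h (a(Suc T := y)))"
    by (subst sum.cartesian_product[symmetric]) simp
  also have "\<dots> = (\<Sum>a\<in>PiE {1..T} (\<lambda>_. A). \<Sum>i\<in>A. h (a(Suc T := i)))"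
    by (rule sum.swap)
  finally show ?thesis .
qed

lemma sum_gbpa_path_prob_Suc:
  "(\<Sum>b\<in>PiE {1..Suc T} (\<lambda>_. {..<N}). gbpa_path_prob f N \<eta> g (Suc T) b * X b)
   = (\<Sum>a\<in>PiE {1..T} (\<lambda>_. {..<N}). gbpa_path_prob f N \<eta> g T a *
        (\<Sum>i<N. smooth_grad f N \<eta> (gbpa_G f N \<eta> g a T) i * X (a(Suc T := i))))"
  unfolding sum_PiE_Suc gbpa_path_prob_Suc_fun_upd by (simp add: sum_distrib_left mult_ac)

lemma sum_fun_upd_Suc:
  "(\<Sum>t\<in>{1..Suc T}. g t ((a(Suc T := i)) t)) = (\<Sum>t\<in>{1..T}. g t (a t)) + g (Suc T) i"
proof -
  have "(\<Sum>t\<in>{1..T}. g t ((a(Suc T := i)) t)) = (\<Sum>t\<in>{1..T}. g t (a t))"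
    by (intro sum.cong) auto
  then show ?thesis by (simp add: sum.cl_ivl_Suc)
qed

context perturbation
begin

lemma sum_gbpa_path_prob:
  assumes N: "2 \<le> N" and eta: "\<eta> > 0"
  shows "(\<Sum>a\<in>PiE {1..T} (\<lambda>_. {..<N}). gbpa_path_prob f N \<eta> g T a) = 1"
proof (induction T)
  case 0
  then show ?case by (simp add: gbpa_path_prob_def)
next
  case (Suc T)
  then show ?case
    using sum_gbpa_path_prob_Suc[of f N \<eta> g T "\<lambda>_. 1"] sum_smooth_grad[OF N eta] by simp
qed

text \<open>The estimated gain of arm \<open>j\<close> is unbiased whenever \<open>j\<close> has positive probability,
  and never overestimates it otherwise.\<close>

lemma expected_estimate_update_ge:
  assumes N: "2 \<le> N" and eta: "\<eta> > 0" and j: "j < N" and gj: "gj \<le> 0"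
  shows "G j + gj \<le> (\<Sum>i<N. smooth_grad f N \<eta> G i * (G(i := G i + (if i = j then gj else 0) / smooth_grad f N \<eta> G i)) j)"
proof -
  let ?p = "smooth_grad f N \<eta> G"
  have "(\<Sum>i<N. ?p i * (G(i := G i + (if i = j then gj else 0) / ?p i)) j)
      = (\<Sum>i<N. ?p i * G j + (if i = j then ?p j * (gj / ?p j) else 0))"
    by (intro sum.cong) (auto simp: algebra_simps)
  also have "\<dots> = G j * (\<Sum>i<N. ?p i) + ?p j * (gj / ?p j)"
    using j by (simp add: sum.distrib sum_distrib_left mult.commute)
  also have "\<dots> = G j + ?p j * (gj / ?p j)"
    using sum_smooth_grad[OF N eta] by simp
  finally show ?thesis
    using gj by (cases "?p j = 0") auto
qed

lemma cumulative_gain_le_expected_estimate: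
  assumes N: "2 \<le> N" and eta: "\<eta> > 0" and j: "j < N"
    and gs: "\<forall>t\<in>{1..T}. \<forall>i<N. -1 \<le> g t i \<and> g t i \<le> 0"
  shows "(\<Sum>t\<in>{1..T}. g t j)
    \<le> (\<Sum>a\<in>PiE {1..T} (\<lambda>_. {..<N}). gbpa_path_prob f N \<eta> g T a * gbpa_G f N \<eta> g a T j)"
  using gs
proof (induction T)
  case 0
  then show ?case by (simp add: gbpa_path_prob_def)
next
  case (Suc T)
  let ?A = "PiE {1..T} (\<lambda>_. {..<N})"
  let ?W = "gbpa_path_prob f N \<eta> g T"
  let ?G = "\<lambda>a. gbpa_G f N \<eta> g a T"
  have "(\<Sum>t\<in>{1..Suc T}. g t j) = (\<Sum>t\<in>{1..T}. g t j) + g (Suc T) j"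
    by simp
  also have "\<dots> \<le> (\<Sum>a\<in>?A. ?W a * ?G a j) + g (Suc T) j * (\<Sum>a\<in>?A. ?W a)"
    using Suc sum_gbpa_path_prob[OF N eta] by simp
  also have "\<dots> = (\<Sum>a\<in>?A. ?W a * ?G a j + g (Suc T) j * ?W a)"
    by (simp only: sum.distrib sum_distrib_left)
  also have "\<dots> = (\<Sum>a\<in>?A. ?W a * (?G a j + g (Suc T) j))"
    by (simp add: algebra_simps)
  also have "\<dots> \<le> (\<Sum>a\<in>?A. ?W a *
      (\<Sum>i<N. smooth_grad f N \<eta> (?G a) i * gbpa_G f N \<eta> g (a(Suc T := i)) (Suc T) j))"
  proof (intro sum_mono mult_left_mono gbpa_path_prob_nonneg)
    fix a
    have "(\<Sum>i<N. smooth_grad f N \<eta> (?G a) i * gbpa_G f N \<eta> g (a(Suc T := i)) (Suc T) j)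
        = (\<Sum>i<N. smooth_grad f N \<eta> (?G a) i *
             ((?G a)(i := ?G a i + (if i = j then g (Suc T) j else 0) / smooth_grad f N \<eta> (?G a) i)) j)"
      by (intro sum.cong refl) (simp only: gbpa_G_Suc_fun_upd, auto)
    then show "?G a j + g (Suc T) j
        \<le> (\<Sum>i<N. smooth_grad f N \<eta> (?G a) i * gbpa_G f N \<eta> g (a(Suc T := i)) (Suc T) j)"
      using expected_estimate_update_ge[OF N eta j, of "g (Suc T) j" "?G a"] Suc.prems j by auto
  qed
  also have "\<dots> = (\<Sum>b\<in>PiE {1..Suc T} (\<lambda>_. {..<N}).
                    gbpa_path_prob f N \<eta> g (Suc T) b * gbpa_G f N \<eta> g b (Suc T) j)"
    by (rule sum_gbpa_path_prob_Suc[symmetric])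
  finally show ?case .
qed

end

section \<open>The regret bound\<close>

context gbpa_perturbation
begin

lemma expected_smooth_potential_step_le:
  assumes N: "2 \<le> N" and eta: "\<eta> > 0" and gt: "\<forall>i<N. -1 \<le> gt i \<and> gt i \<le> 0"
  shows "(\<Sum>i<N. smooth_grad f N \<eta> G i *
            (smooth_potential f N \<eta> (G(i := G i + gt i / smooth_grad f N \<eta> G i)) - (S + gt i)))
         \<le> smooth_potential f N \<eta> G - S + real N * (2 * C / ((1 - \<alpha>) * \<eta> powr (1 - \<alpha>)))"
proof -
  let ?B = "2 * C / ((1 - \<alpha>) * \<eta> powr (1 - \<alpha>))"
  have "(\<Sum>i<N. smooth_grad f N \<eta> G i *
            (smooth_potential f N \<eta> (G(i := G i + gt i / smooth_grad f N \<eta> G i)) - (S + gt i)))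
      \<le> (\<Sum>i<N. smooth_grad f N \<eta> G i * (smooth_potential f N \<eta> G - S) + ?B)"
    using gt by (intro sum_mono) (simp add: diff_diff_eq[symmetric] smooth_potential_step_le[OF N _ eta])
  also have "\<dots> = (smooth_potential f N \<eta> G - S) * (\<Sum>i<N. smooth_grad f N \<eta> G i) + real N * ?B"
    by (simp add: sum.distrib sum_distrib_right[symmetric] mult.commute)
  finally show ?thesis
    using sum_smooth_grad[OF N eta] by simp
qed

lemma expected_potential_minus_gain_le:
  assumes N: "2 \<le> N" and eta: "\<eta> > 0"
    and gs: "\<forall>t\<in>{1..T}. \<forall>i<N. -1 \<le> g t i \<and> g t i \<le> 0"
  shows "(\<Sum>a\<in>PiE {1..T} (\<lambda>_. {..<N}). gbpa_path_prob f N \<eta> g T a *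
            (smooth_potential f N \<eta> (gbpa_G f N \<eta> g a T) - (\<Sum>t\<in>{1..T}. g t (a t))))
         \<le> smooth_potential f N \<eta> (\<lambda>_. 0) + real T * real N * (2 * C / ((1 - \<alpha>) * \<eta> powr (1 - \<alpha>)))"
  using gs
proof (induction T)
  case 0
  then show ?case by (simp add: gbpa_path_prob_def)
next
  case (Suc T)
  let ?B = "2 * C / ((1 - \<alpha>) * \<eta> powr (1 - \<alpha>))"
  let ?A = "PiE {1..T} (\<lambda>_. {..<N})"
  let ?W = "gbpa_path_prob f N \<eta> g T"
  let ?V = "\<lambda>a. smooth_potential f N \<eta> (gbpa_G f N \<eta> g a T) - (\<Sum>t\<in>{1..T}. g t (a t))"
  have "(\<Sum>b\<in>PiE {1..Suc T} (\<lambda>_. {..<N}). gbpa_path_prob f N \<eta> g (Suc T) b *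
            (smooth_potential f N \<eta> (gbpa_G f N \<eta> g b (Suc T)) - (\<Sum>t\<in>{1..Suc T}. g t (b t))))
     = (\<Sum>a\<in>?A. ?W a * (\<Sum>i<N. smooth_grad f N \<eta> (gbpa_G f N \<eta> g a T) i *
          (smooth_potential f N \<eta> (gbpa_G f N \<eta> g (a(Suc T := i)) (Suc T))
            - (\<Sum>t\<in>{1..Suc T}. g t ((a(Suc T := i)) t)))))"
    by (rule sum_gbpa_path_prob_Suc)
  also have "\<dots> \<le> (\<Sum>a\<in>?A. ?W a * (?V a + real N * ?B))"
  proof (intro sum_mono mult_left_mono gbpa_path_prob_nonneg)
    fix a
    let ?G = "gbpa_G f N \<eta> g a T"
    have "(\<Sum>i<N. smooth_grad f N \<eta> ?G i *
            (smooth_potential f N \<eta> (gbpa_G f N \<eta> g (a(Suc T := i)) (Suc T))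
              - (\<Sum>t\<in>{1..Suc T}. g t ((a(Suc T := i)) t))))
        = (\<Sum>i<N. smooth_grad f N \<eta> ?G i *
            (smooth_potential f N \<eta> (?G(i := ?G i + g (Suc T) i / smooth_grad f N \<eta> ?G i))
              - ((\<Sum>t\<in>{1..T}. g t (a t)) + g (Suc T) i)))"
      by (simp only: gbpa_G_Suc_fun_upd sum_fun_upd_Suc)
    also have "\<dots> \<le> ?V a + real N * ?B"
      using Suc.prems by (intro expected_smooth_potential_step_le[OF N eta]) auto
    finally show "(\<Sum>i<N. smooth_grad f N \<eta> ?G i *
            (smooth_potential f N \<eta> (gbpa_G f N \<eta> g (a(Suc T := i)) (Suc T))
              - (\<Sum>t\<in>{1..Suc T}. g t ((a(Suc T := i)) t)))) \<le> ?V a + real N * ?B" .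
  qed
  also have "\<dots> = (\<Sum>a\<in>?A. ?W a * ?V a + real N * ?B * ?W a)"
    by (simp add: algebra_simps)
  also have "\<dots> = (\<Sum>a\<in>?A. ?W a * ?V a) + real N * ?B * (\<Sum>a\<in>?A. ?W a)"
    by (simp only: sum.distrib sum_distrib_left[symmetric])
  also have "\<dots> \<le> smooth_potential f N \<eta> (\<lambda>_. 0) + real T * real N * ?B + real N * ?B"
    using Suc sum_gbpa_path_prob[OF N eta] by simp
  also have "\<dots> = smooth_potential f N \<eta> (\<lambda>_. 0) + real (Suc T) * real N * ?B"
    by (simp only: of_nat_Suc distrib_right mult_1 add.assoc)
  finally show ?case .
qed

lemma gbpa_regret_le:
  assumes N: "2 \<le> N" and eta: "\<eta> > 0"
    and gs: "\<forall>t\<in>{1..T}. \<forall>i<N. -1 \<le> g t i \<and> g t i \<le> 0"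
  shows "gbpa_regret f N \<eta> g T \<le> \<eta> * (exp_max f N - (\<integral>z. z \<partial>pert_dist f))
           + real T * real N * (2 * C / ((1 - \<alpha>) * \<eta> powr (1 - \<alpha>)))"
proof -
  let ?A = "PiE {1..T} (\<lambda>_. {..<N})"
  let ?W = "gbpa_path_prob f N \<eta> g T"
  let ?S = "\<lambda>a. \<Sum>t\<in>{1..T}. g t (a t)"
  let ?Phi = "\<lambda>a. smooth_potential f N \<eta> (gbpa_G f N \<eta> g a T)"
  let ?EZ = "\<integral>z. z \<partial>pert_dist f"
  define best where "best = Max ((\<lambda>i. \<Sum>t\<in>{1..T}. g t i) ` {..<N})"
  have "0 \<in> {..<N}" using N by simp
  then have "best \<in> (\<lambda>i. \<Sum>t\<in>{1..T}. g t i) ` {..<N}"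
    unfolding best_def by (intro Max_in) auto
  then obtain j where j: "j < N" "best = (\<Sum>t\<in>{1..T}. g t j)" by auto
  have split: "gbpa_regret f N \<eta> g T = (\<Sum>a\<in>?A. ?W a * (?Phi a - ?S a)) + (\<Sum>a\<in>?A. ?W a * (best - ?Phi a))"
    unfolding gbpa_regret_def best_def[symmetric] sum.distrib[symmetric]
    by (intro sum.cong refl) (simp add: algebra_simps)
  have "(\<Sum>a\<in>?A. ?W a * (best - ?Phi a)) \<le> (\<Sum>a\<in>?A. ?W a * (best - gbpa_G f N \<eta> g a T j - \<eta> * ?EZ))"
  proof (intro sum_mono mult_left_mono gbpa_path_prob_nonneg)
    fix a
    show "best - ?Phi a \<le> best - gbpa_G f N \<eta> g a T j - \<eta> * ?EZ"
      using smooth_potential_ge[OF j(1), of "gbpa_G f N \<eta> g a T" \<eta>] by simp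
  qed
  also have "\<dots> = (\<Sum>a\<in>?A. (best - \<eta> * ?EZ) * ?W a - ?W a * gbpa_G f N \<eta> g a T j)"
    by (simp add: algebra_simps)
  also have "\<dots> = (best - \<eta> * ?EZ) * (\<Sum>a\<in>?A. ?W a) - (\<Sum>a\<in>?A. ?W a * gbpa_G f N \<eta> g a T j)"
    by (simp only: sum_subtractf sum_distrib_left[symmetric])
  also have "\<dots> \<le> - \<eta> * ?EZ"
    using sum_gbpa_path_prob[OF N eta] cumulative_gain_le_expected_estimate[OF N eta j(1) gs] j(2)
    by simp
  finally show ?thesis
    using split expected_potential_minus_gain_le[OF N eta gs] smooth_potential_zero[of \<eta> N] N eta
    by (simp add: algebra_simps)
qed

end

lemma gbpa_regret_single_arm: "gbpa_regret f 1 \<eta> g T = 0"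
proof -
  have "gbpa_regret f 1 \<eta> g T = (\<Sum>a\<in>PiE {1..T} (\<lambda>_. {..<1::nat}). gbpa_path_prob f 1 \<eta> g T a * 0)"
    unfolding gbpa_regret_def
  proof (intro sum.cong refl)
    fix a assume a: "a \<in> PiE {1..T} (\<lambda>_. {..<1::nat})"
    have "(\<Sum>t\<in>{1..T}. g t (a t)) = (\<Sum>t\<in>{1..T}. g t 0)"
      using a by (intro sum.cong refl) (auto simp: PiE_iff)
    then show "gbpa_path_prob f 1 \<eta> g T a * (Max ((\<lambda>i. \<Sum>t\<in>{1..T}. g t i) ` {..<1}) - (\<Sum>t\<in>{1..T}. g t (a t)))
      = gbpa_path_prob f 1 \<eta> g T a * 0"
      by (simp add: lessThan_Suc)
  qed
  then show ?thesis by simp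
qed

lemma gbpa_regret_no_rounds:
  assumes "1 \<le> N"
  shows "gbpa_regret f N \<eta> g 0 = 0"
proof -
  have "(0::nat) \<in> {..<N}" using assms by simp
  then have "(\<lambda>i. 0::real) ` {..<N} = {0}" by auto
  then show ?thesis unfolding gbpa_regret_def by simp
qed

lemma balanced_penalties:
  fixes K n Q a :: real
  assumes K: "K > 0" and n: "n > 0" and Q: "Q > 0" and a: "0 \<le> a" "a < 1"
  defines "\<eta> \<equiv> (K * n / Q) powr (1 / (2 - a))"
  shows "\<eta> * Q + n * (K / \<eta> powr (1 - a))
       = 2 * K powr (1 / (2 - a)) * n powr (1 / (2 - a)) * Q powr ((1 - a) / (2 - a))"
proof -
  define e where "e = 1 / (2 - a)"
  define x where "x = K * n / Q"
  have x: "x > 0" unfolding x_def using K n Q by simp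
  have e1: "1 - e * (1 - a) = e" and e2: "1 - e = (1 - a) / (2 - a)"
    unfolding e_def using a by (simp_all add: field_simps)
  have nK: "n * K = Q * x" unfolding x_def using Q by simp
  have "n * (K / (x powr e) powr (1 - a)) = (n * K) / x powr (e * (1 - a))"
    by (simp add: powr_powr)
  also have "\<dots> = Q * (x / x powr (e * (1 - a)))" unfolding nK by simp
  also have "x / x powr (e * (1 - a)) = x powr (1 - e * (1 - a))"
    using x by (simp add: powr_diff)
  finally have second: "n * (K / (x powr e) powr (1 - a)) = Q * x powr e"
    unfolding e1 .
  have xe: "x powr e = K powr e * n powr e / Q powr e"
    unfolding x_def using K n Q by (simp add: powr_divide powr_mult)
  have qq: "Q * (1 / Q powr e) = Q powr (1 - e)"
    using Q by (simp add: powr_diff)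
  have "x powr e * Q + Q * x powr e = 2 * (K powr e * n powr e) * (Q * (1 / Q powr e))"
    unfolding xe by (simp add: field_simps)
  also have "\<dots> = 2 * K powr e * n powr e * Q powr ((1 - a) / (2 - a))"
    unfolding qq e2 by simp
  finally show ?thesis
    unfolding \<eta>_def e_def[symmetric] x_def[symmetric] second .
qed

lemma regret_bound_sublinear:
  assumes "0 \<le> \<alpha>" "\<alpha> < 1" "\<epsilon> > 0"
  shows "\<exists>T0. \<forall>T\<ge>T0. regret_bound C \<alpha> Q N T \<le> \<epsilon> * real T"
proof -
  define e where "e = 1 / (2 - \<alpha>)"
  define c where "c = 2 * (2 * C / (1 - \<alpha>)) powr e * real N powr e * Q powr ((1 - \<alpha>) / (2 - \<alpha>))"
  have e: "0 < e" "e < 1" unfolding e_def using assms by (auto simp: field_simps)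
  have c: "0 \<le> c" unfolding c_def by simp
  have rb: "regret_bound C \<alpha> Q N T = c * real T powr e" for T
    unfolding regret_bound_def c_def e_def by (simp add: powr_mult)
  define T0 where "T0 = nat \<lceil>(c / \<epsilon>) powr (1 / (1 - e))\<rceil> + 1"
  have "c * real T powr e \<le> \<epsilon> * real T" if T: "T0 \<le> T" for T
  proof -
    have T1: "1 \<le> real T" using T unfolding T0_def by simp
    have "(c / \<epsilon>) powr (1 / (1 - e)) \<le> real T"
      using T unfolding T0_def by linarith
    then have "((c / \<epsilon>) powr (1 / (1 - e))) powr (1 - e) \<le> real T powr (1 - e)"
      using e by (intro powr_mono2) auto
    moreover have "((c / \<epsilon>) powr (1 / (1 - e))) powr (1 - e) = c / \<epsilon>"
      using e c assms by (simp add: powr_powr)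
    ultimately have "c \<le> \<epsilon> * real T powr (1 - e)"
      using assms by (simp add: divide_le_eq mult.commute)
    then have "c * real T powr e \<le> \<epsilon> * real T powr (1 - e) * real T powr e"
      by (intro mult_right_mono) auto
    also have "\<dots> = \<epsilon> * real T"
      using T1 by (simp add: mult.assoc powr_add[symmetric])
    finally show ?thesis .
  qed
  then show ?thesis unfolding rb by blast
qed

context gbpa_perturbation
begin

lemma gbpa_regret_le_regret_bound:
  assumes N: "1 \<le> N" and Q: "Q > 0"
    and Q_bound: "exp_max f N - (\<integral>z. z \<partial>pert_dist f) \<le> Q"
    and g: "gain_seq N T g"
  shows "gbpa_regret f N (eta_choice C \<alpha> Q N T) g T \<le> regret_bound C \<alpha> Q N T"
proof (cases "N = 1 \<or> T = 0")
  case True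
  then show ?thesis
    using gbpa_regret_single_arm gbpa_regret_no_rounds N by (auto simp: regret_bound_def)
next
  case False
  then have N2: "2 \<le> N" and T: "1 \<le> T" using N by auto
  define \<eta> where "\<eta> = eta_choice C \<alpha> Q N T"
  define K where "K = 2 * C / (1 - \<alpha>)"
  have K: "K > 0" unfolding K_def using C_pos alpha_less_1 by simp
  have n: "real N * real T > 0" using N2 T by simp
  have eta_eq: "\<eta> = (K * (real N * real T) / Q) powr (1 / (2 - \<alpha>))"
    unfolding \<eta>_def eta_choice_def K_def using alpha_less_1 by (simp add: field_simps)
  have "0 < K * (real N * real T) / Q" using K n Q by (rule divide_pos_pos[OF mult_pos_pos])
  then have eta: "\<eta> > 0" unfolding eta_eq powr_gt_zero by linarith
  have "gbpa_regret f N \<eta> g T \<le> \<eta> * (exp_max f N - (\<integral>z. z \<partial>pert_dist f))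
       + real T * real N * (2 * C / ((1 - \<alpha>) * \<eta> powr (1 - \<alpha>)))"
    using g unfolding gain_seq_def by (intro gbpa_regret_le[OF N2 eta]) auto
  also have "\<dots> \<le> \<eta> * Q + real T * real N * (2 * C / ((1 - \<alpha>) * \<eta> powr (1 - \<alpha>)))"
    using Q_bound eta by (simp add: mult_left_mono)
  also have "real T * real N * (2 * C / ((1 - \<alpha>) * \<eta> powr (1 - \<alpha>)))
      = real N * real T * (K / \<eta> powr (1 - \<alpha>))"
    using eta alpha_less_1 by (simp add: K_def field_simps)
  also have "\<eta> * Q + real N * real T * (K / \<eta> powr (1 - \<alpha>)) = regret_bound C \<alpha> Q N T"
    using balanced_penalties[OF K n Q alpha_nonneg alpha_less_1]
    unfolding eta_eq regret_bound_def K_def by simp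
  finally show ?thesis unfolding \<eta>_def .
qed

end

theorem theorem3:
  fixes f :: "real \<Rightarrow> real" and \<alpha> C Q :: real and N :: nat
  assumes f_meas: "f \<in> borel_measurable borel"
    and f_nonneg: "\<forall>z. 0 \<le> f z"
    and f_int: "integrable lborel f"
    and f_one: "(\<integral>z. f z \<partial>lborel) = 1"
    and finite_mean: "integrable lborel (\<lambda>z. z * f z)"
    and unbounded_right: "\<forall>M. cdf (pert_dist f) M < 1"
    and alpha: "0 \<le> \<alpha>" "\<alpha> < 1"
    and C_pos: "C > 0"
    and hazard: "\<forall>z. gen_hazard f \<alpha> z \<le> C"
    and N_pos: "N \<ge> 1"
    and Q_pos: "Q > 0"
    and Q_bound: "exp_max f N - (\<integral>z. z \<partial>pert_dist f) \<le> Q"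
  shows "(\<forall>T g. gain_seq N T g \<longrightarrow>
            gbpa_regret f N (eta_choice C \<alpha> Q N T) g T \<le> regret_bound C \<alpha> Q N T)
       \<and> (\<forall>\<epsilon>>0. \<exists>T0. \<forall>T\<ge>T0. \<forall>g. gain_seq N T g \<longrightarrow>
            gbpa_regret f N (eta_choice C \<alpha> Q N T) g T \<le> \<epsilon> * real T)"
proof -
  interpret gbpa_perturbation f \<alpha> C
    by unfold_locales (fact assms)+
  have bound: "gbpa_regret f N (eta_choice C \<alpha> Q N T) g T \<le> regret_bound C \<alpha> Q N T"
    if "gain_seq N T g" for T g
    using gbpa_regret_le_regret_bound[OF N_pos Q_pos Q_bound that] .
  show ?thesis
    using bound regret_bound_sublinear[OF alpha] by (meson order_trans)
qed

end
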